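(* Let $n\ge2$, $q=2^m$, and let $\mathbf{H}_X^{(q)}$, $\mathbf{H}_Z^{(q)}$ be $q$-ary labelings of the toric Tanner graphs $\mathcal{G}_X$, $\mathcal{G}_Z$ (as defined in the context), with codes $\mathcal{C}_X^{(q)}$, $\mathcal{C}_Z^{(q)}$. If every cycle of the labeled graph $\mathcal{G}_X$ has product $1$ and $(\mathcal{C}_Z^{(q)})^\perp\subset\mathcal{C}_X^{(q)}$, then every cycle of the labeled graph $\mathcal{G}_Z$ has product $1$.
   Context: Indices are taken in $\mathbb{Z}_{2n}=\{0,\dots,2n-1\}$ with arithmetic mod $2n$. Variable nodes: $V=\{(i,j)\in\mathbb{Z}_{2n}^2: i+j\text{ even}\}$ ($2n^2$ nodes). $X$-check nodes: $C_X=\{(i,j): i\text{ odd}, j\text{ even}\}$; $Z$-check nodes: $C_Z=\{(i,j): i\text{ even}, j\text{ odd}\}$. Each check node $(i,j)$ is adjacent to the four variable nodes $(i\pm1,j)$, $(i,j\pm1)$. $\mathcal{G}_X$ is the bipartite graph on $V\cup C_X$ and $\mathcal{G}_Z$ on $V\cup C_Z$ (these are the Tanner graphs of the binary toric code). A $q$-ary labeling is a matrix $\mathbf{H}_X^{(q)}=(x_{c,v})\in\mathbb{F}_q^{C_X\times V}$ with $x_{c,v}\neq0$ iff $c$ and $v$ are adjacent, and similarly $\mathbf{H}_Z^{(q)}=(z_{c,v})\in\mathbb{F}_q^{C_Z\times V}$; the label of edge $(c,v)$ is $x_{c,v}$ (resp. $z_{c,v}$). $\mathcal{C}_X^{(q)}=\{w\in\mathbb{F}_q^V:\mathbf{H}_X^{(q)}w=0\}$,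 $\mathcal{C}_Z^{(q)}=\{w\in\mathbb{F}_q^V:\mathbf{H}_Z^{(q)}w=0\}$, and $\perp$ is with respect to the standard bilinear form on $\mathbb{F}_q^V$ (so $(\mathcal{C}_Z^{(q)})^\perp\subset\mathcal{C}_X^{(q)}$ iff $\mathbf{H}_X^{(q)}(\mathbf{H}_Z^{(q)})^T=0$). For a cycle $v_1,c_1,v_2,\dots,v_k,c_k,v_1$ in a labeled Tanner graph with labels $h_{c,v}$, its product is $\prod_{t=1}^k h_{c_t v_{t+1}}h_{c_t v_t}^{-1}$ (indices of $v$ mod $k$). *)

theory Defs
  imports Main
begin

text \<open>Indices in Z_{2n} are represented by naturals below 2n; nodes are pairs.\<close>

definition varN :: "nat \<Rightarrow> (nat \<times> nat) set" where
  "varN n = {(i,j). i < 2*n \<and> j < 2*n \<and> even (i+j)}"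

definition chkX :: "nat \<Rightarrow> (nat \<times> nat) set" where
  "chkX n = {(i,j). i < 2*n \<and> j < 2*n \<and> odd i \<and> even j}"

definition chkZ :: "nat \<Rightarrow> (nat \<times> nat) set" where
  "chkZ n = {(i,j). i < 2*n \<and> j < 2*n \<and> even i \<and> odd j}"

definition adj :: "nat \<Rightarrow> nat \<times> nat \<Rightarrow> nat \<times> nat \<Rightarrow> bool" where
  "adj n c v = (case c of (i,j) \<Rightarrow>
     v \<in> {((i+1) mod (2*n), j), ((i + 2*n - 1) mod (2*n), j),
           (i, (j+1) mod (2*n)), (i, (j + 2*n - 1) mod (2*n))})"

definition is_labeling :: "nat \<Rightarrow> (nat \<times> nat) set \<Rightarrow> (nat \<times> nat \<Rightarrow> nat \<times> nat \<Rightarrow> 'a::field) \<Rightarrow> bool" where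
  "is_labeling n C h = (\<forall>c\<in>C. \<forall>v\<in>varN n. (h c v \<noteq> 0 \<longleftrightarrow> adj n c v))"

definition vecs :: "nat \<Rightarrow> (nat \<times> nat \<Rightarrow> 'a::field) set" where
  "vecs n = {w. \<forall>v. v \<notin> varN n \<longrightarrow> w v = 0}"

definition code :: "nat \<Rightarrow> (nat \<times> nat) set \<Rightarrow> (nat \<times> nat \<Rightarrow> nat \<times> nat \<Rightarrow> 'a::field) \<Rightarrow> (nat \<times> nat \<Rightarrow> 'a) set" where
  "code n C h = {w \<in> vecs n. \<forall>c\<in>C. (\<Sum>v\<in>varN n. h c v * w v) = 0}"

definition perp :: "nat \<Rightarrow> (nat \<times> nat \<Rightarrow> 'a::field) set \<Rightarrow> (nat \<times> nat \<Rightarrow> 'a) set" where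
  "perp n S = {u \<in> vecs n. \<forall>w\<in>S. (\<Sum>v\<in>varN n. u v * w v) = 0}"

definition is_cycle :: "nat \<Rightarrow> (nat \<times> nat) set \<Rightarrow> (nat \<times> nat) list \<Rightarrow> (nat \<times> nat) list \<Rightarrow> bool" where
  "is_cycle n C vs cs = (length vs = length cs \<and> length vs \<ge> 2 \<and> distinct vs \<and> distinct cs \<and>
     set vs \<subseteq> varN n \<and> set cs \<subseteq> C \<and>
     (\<forall>t < length vs. adj n (cs!t) (vs!t) \<and> adj n (cs!t) (vs!((t+1) mod length vs))))"

definition cycle_product :: "(nat \<times> nat \<Rightarrow> nat \<times> nat \<Rightarrow> 'a::field) \<Rightarrow> (nat \<times> nat) list \<Rightarrow> (nat \<times> nat) list \<Rightarrow> 'a" where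
  "cycle_product h vs cs = (\<Prod>t < length vs. h (cs!t) (vs!((t+1) mod length vs)) * inverse (h (cs!t) (vs!t)))"

end

theory Submission
  imports Defs "HOL-Number_Theory.Residues"
begin

text \<open>
  Each X-check and each Z-check share either no variable or exactly two, so orthogonality of
  the rows of H_X and H_Z, in characteristic 2, says that the two products of labels over the
  shared variables agree. For a Z-check d with neighbours a, b one finds a neighbour u of d and
  X-checks c1, c2 diagonal to d such that a, c1, u, c2, b is a path in the X-graph; the label
  identities for (c1, d) and (c2, d) show that the step a, d, b of a Z-cycle contributes the
  inverse of the product of this detour. So the product of a Z-cycle is the inverse of the
  product of a closed walk in the X-graph, and the latter is 1 because a closed walk splits at
  any repeated node into shorter closed walks, down to simple cycles.
\<close>

subsection \<open>Closed walks in a labelled bipartite graph\<close>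

definition closed_walk ::
    "('c \<Rightarrow> 'v \<Rightarrow> bool) \<Rightarrow> 'v set \<Rightarrow> 'c set \<Rightarrow> nat \<Rightarrow> (nat \<Rightarrow> 'v) \<Rightarrow> (nat \<Rightarrow> 'c) \<Rightarrow> bool" where
  "closed_walk E Vs Cs k V C \<longleftrightarrow> 0 < k \<and> V k = V 0 \<and>
     (\<forall>t<k. C t \<in> Cs \<and> V t \<in> Vs \<and> E (C t) (V t) \<and> E (C t) (V (Suc t)))"

definition walk_product :: "('c \<Rightarrow> 'v \<Rightarrow> 'a::field) \<Rightarrow> nat \<Rightarrow> (nat \<Rightarrow> 'v) \<Rightarrow> (nat \<Rightarrow> 'c) \<Rightarrow> 'a" where
  "walk_product h k V C = (\<Prod>t<k. h (C t) (V (Suc t)) * inverse (h (C t) (V t)))"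

definition two_step_product ::
    "('c \<Rightarrow> 'v \<Rightarrow> 'a::field) \<Rightarrow> 'c \<Rightarrow> 'c \<Rightarrow> 'v \<Rightarrow> 'v \<Rightarrow> 'v \<Rightarrow> 'a" where
  "two_step_product h c\<^sub>1 c\<^sub>2 a u b = h c\<^sub>1 u * inverse (h c\<^sub>1 a) * (h c\<^sub>2 b * inverse (h c\<^sub>2 u))"

lemma closed_walkD:
  assumes "closed_walk E Vs Cs k V C" "t < k"
  shows "C t \<in> Cs" "V t \<in> Vs" "E (C t) (V t)" "E (C t) (V (Suc t))"
  using assms by (auto simp: closed_walk_def)

lemma bij_betw_add_mod:
  fixes r k :: nat
  assumes r: "r < k"
  shows "bij_betw (\<lambda>t. (t + r) mod k) {..<k} {..<k}"
proof -
  have "inj_on (\<lambda>t. (t + r) mod k) {..<k}"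
  proof (rule inj_onI)
    fix a b assume ab: "a \<in> {..<k}" "b \<in> {..<k}" "(a + r) mod k = (b + r) mod k"
    have "x < k \<Longrightarrow> (x + r) mod k = (if x + r < k then x + r else x + r - k)" for x :: nat
      using r by (simp add: mod_if)
    with ab r show "a = b" by (auto split: if_splits)
  qed
  moreover have "(\<lambda>t. (t + r) mod k) ` {..<k} \<subseteq> {..<k}" using r by auto
  ultimately show ?thesis
    unfolding bij_betw_def using endo_inj_surj[OF finite_lessThan] by blast
qed

lemma prod_lessThan_add: "(\<Prod>t<a + b. f t) = (\<Prod>t<a. f t) * (\<Prod>t<b. f (a + t))"
  for f :: "nat \<Rightarrow> 'a::comm_monoid_mult"
  by (induction b) (auto simp: mult.assoc)

lemma closed_walk_rotate:
  assumes w: "closed_walk E Vs Cs k V C" and r: "r < k"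
  shows "closed_walk E Vs Cs k (\<lambda>t. V ((t + r) mod k)) (\<lambda>t. C ((t + r) mod k))"
    and "walk_product h k (\<lambda>t. V ((t + r) mod k)) (\<lambda>t. C ((t + r) mod k)) = walk_product h k V C"
proof -
  have V_Suc: "V ((Suc t + r) mod k) = V (Suc ((t + r) mod k))" for t
  proof -
    have "(t + r) mod k < k" using r by simp
    moreover have "(Suc t + r) mod k = Suc ((t + r) mod k) mod k" by (simp add: mod_Suc_eq)
    ultimately show ?thesis
      using w by (cases "Suc ((t + r) mod k) = k") (auto simp: closed_walk_def)
  qed
  show "closed_walk E Vs Cs k (\<lambda>t. V ((t + r) mod k)) (\<lambda>t. C ((t + r) mod k))"
    using w r V_Suc by (auto simp: closed_walk_def)
  have "walk_product h k (\<lambda>t. V ((t + r) mod k)) (\<lambda>t. C ((t + r) mod k)) =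
      (\<Prod>t<k. (\<lambda>s. h (C s) (V (Suc s)) * inverse (h (C s) (V s))) ((t + r) mod k))"
    unfolding walk_product_def using V_Suc by simp
  also have "\<dots> = walk_product h k V C"
    unfolding walk_product_def by (rule prod.reindex_bij_betw[OF bij_betw_add_mod[OF r]])
  finally show "walk_product h k (\<lambda>t. V ((t + r) mod k)) (\<lambda>t. C ((t + r) mod k)) =
      walk_product h k V C" .
qed

lemma closed_walk_split_at_vertex:
  assumes w: "closed_walk E Vs Cs k V C" and j: "0 < j" "j < k" and e: "V j = V 0"
  shows "closed_walk E Vs Cs j V C"
    and "closed_walk E Vs Cs (k - j) (\<lambda>t. V (j + t)) (\<lambda>t. C (j + t))"
    and "walk_product h k V C =
      walk_product h j V C * walk_product h (k - j) (\<lambda>t. V (j + t)) (\<lambda>t. C (j + t))"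
proof -
  show "closed_walk E Vs Cs j V C" "closed_walk E Vs Cs (k - j) (\<lambda>t. V (j + t)) (\<lambda>t. C (j + t))"
    using w j e by (auto simp: closed_walk_def)
  have "walk_product h k V C = walk_product h (j + (k - j)) V C" using j by simp
  also have "\<dots> = walk_product h j V C * walk_product h (k - j) (\<lambda>t. V (j + t)) (\<lambda>t. C (j + t))"
    unfolding walk_product_def by (simp add: prod_lessThan_add)
  finally show "walk_product h k V C =
      walk_product h j V C * walk_product h (k - j) (\<lambda>t. V (j + t)) (\<lambda>t. C (j + t))" .
qed

lemma closed_walk_split_at_check:
  assumes w: "closed_walk E Vs Cs k V C" and j: "0 < j" "j < k" and e: "C j = C 0"
  defines "V' \<equiv> \<lambda>t. if t = 0 then V 0 else V (j + t)"
    and "C' \<equiv> \<lambda>t. if t = 0 then C 0 else C (j + t)"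
  shows "closed_walk E Vs Cs j (V(0 := V j)) C"
    and "closed_walk E Vs Cs (k - j) V' C'"
    and "walk_product h k V C = walk_product h j (V(0 := V j)) C * walk_product h (k - j) V' C'"
proof -
  note W = closed_walkD[OF w]
  have k: "0 < k" and Vk: "V k = V 0" using w by (simp_all add: closed_walk_def)
  show "closed_walk E Vs Cs j (V(0 := V j)) C"
    unfolding closed_walk_def
  proof (intro conjI allI impI)
    fix t assume "t < j"
    then have "t < k" using j by simp
    then show "C t \<in> Cs" "(V(0 := V j)) t \<in> Vs" "E (C t) ((V(0 := V j)) t)"
      "E (C t) ((V(0 := V j)) (Suc t))"
      using W(1-4)[OF \<open>t < k\<close>] W(2,3)[OF j(2)] e by simp_all
  qed (use j in simp_all)
  show "closed_walk E Vs Cs (k - j) V' C'"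
    unfolding closed_walk_def
  proof (intro conjI allI impI)
    fix t assume "t < k - j"
    then have "j + t < k" by simp
    then show "C' t \<in> Cs" "V' t \<in> Vs" "E (C' t) (V' t)" "E (C' t) (V' (Suc t))"
      using W(1-4)[OF \<open>j + t < k\<close>] W(1-3)[OF k] W(4)[OF j(2)] e
      by (simp_all add: V'_def C'_def)
  qed (use j Vk in \<open>simp_all add: V'_def\<close>)
  obtain i where i: "j = Suc i" using j(1) by (cases j) auto
  obtain l where l: "k - j = Suc l" using j(2) by (cases "k - j") auto
  define f where "f t = h (C t) (V (Suc t)) * inverse (h (C t) (V t))" for t
  have first: "(\<Prod>t<j. f t) = f 0 * (\<Prod>t<i. f (Suc t))"
    unfolding i by (rule prod.lessThan_Suc_shift)
  have second: "(\<Prod>t<k - j. f (j + t)) = f j * (\<Prod>t<l. f (Suc (j + t)))"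
    unfolding l prod.lessThan_Suc_shift by simp
  have "walk_product h k V C = (\<Prod>t<j. f t) * (\<Prod>t<k - j. f (j + t))"
    using prod_lessThan_add[of f j "k - j"] j by (simp add: walk_product_def f_def)
  also have "\<dots> = (f 0 * f j) * ((\<Prod>t<i. f (Suc t)) * (\<Prod>t<l. f (Suc (j + t))))"
    unfolding first second by (simp only: ac_simps)
  also have "f 0 * f j = (h (C 0) (V 1) * inverse (h (C 0) (V j))) *
      (h (C 0) (V (Suc j)) * inverse (h (C 0) (V 0)))"
    using e by (simp add: f_def ac_simps)
  also have "walk_product h j (V(0 := V j)) C =
      h (C 0) (V 1) * inverse (h (C 0) (V j)) * (\<Prod>t<i. f (Suc t))"
    unfolding walk_product_def i prod.lessThan_Suc_shift by (simp add: f_def)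
  moreover have "walk_product h (k - j) V' C' =
      h (C 0) (V (Suc j)) * inverse (h (C 0) (V 0)) * (\<Prod>t<l. f (Suc (j + t)))"
    unfolding walk_product_def l prod.lessThan_Suc_shift by (simp add: f_def V'_def C'_def)
  ultimately show "walk_product h k V C = walk_product h j (V(0 := V j)) C * walk_product h (k - j) V' C'"
    by (simp add: ac_simps)
qed

text \<open>Splitting at a repeated vertex or check reduces every closed walk to simple cycles.\<close>

lemma walk_product_eq_one_if_cycles:
  assumes nonzero: "\<And>c v. c \<in> Cs \<Longrightarrow> v \<in> Vs \<Longrightarrow> E c v \<Longrightarrow> h c v \<noteq> 0"
    and cycles: "\<And>k V C. closed_walk E Vs Cs k V C \<Longrightarrow> 2 \<le> k \<Longrightarrow> inj_on V {..<k} \<Longrightarrow>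
      inj_on C {..<k} \<Longrightarrow> walk_product h k V C = 1"
  shows "closed_walk E Vs Cs k V C \<Longrightarrow> walk_product h k V C = 1"
proof (induction k arbitrary: V C rule: less_induct)
  case (less k V C)
  have w: "closed_walk E Vs Cs k V C" by fact
  have k: "0 < k" and Vk: "V k = V 0" using w by (auto simp: closed_walk_def)
  consider (loop) "k = 1"
    | (vertex) i j where "i < j" "j \<le> k" "(i, j) \<noteq> (0, k)" "V i = V j"
    | (check) i j where "i < j" "j < k" "C i = C j"
    | (simple) "2 \<le> k" "inj_on V {..<k}" "inj_on C {..<k}"
  proof -
    have "inj_on V {..<k}" if "\<not> (\<exists>i j. i < j \<and> j \<le> k \<and> (i, j) \<noteq> (0, k) \<and> V i = V j)"
      using that by (intro inj_onI) (metis lessThan_iff linorder_neqE_nat nat_less_le prod.inject)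
    moreover have "inj_on C {..<k}" if "\<not> (\<exists>i j. i < j \<and> j < k \<and> C i = C j)"
      using that by (intro inj_onI) (metis lessThan_iff linorder_neqE_nat)
    ultimately show ?thesis using that k by (metis One_nat_def less_2_cases_iff not_less)
  qed
  then show ?case
  proof cases
    case loop
    have "h (C 0) (V 0) \<noteq> 0" using nonzero closed_walkD[OF w, of 0] loop by simp
    then show ?thesis using loop Vk by (simp add: walk_product_def)
  next
    case (vertex i j)
    let ?V = "\<lambda>t. V ((t + i) mod k)" and ?C = "\<lambda>t. C ((t + i) mod k)"
    have i: "i < k" and ji: "0 < j - i" "j - i < k" using vertex by auto
    have "?V (j - i) = ?V 0" using vertex Vk by (cases "j = k") auto
    note split = closed_walk_split_at_vertex[OF closed_walk_rotate(1)[OF w i] ji this]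
    have "walk_product h k ?V ?C = 1"
      unfolding split(3) less.IH[OF ji(2) split(1)] less.IH[OF diff_less[OF ji(1) k] split(2)] by simp
    then show ?thesis by (simp add: closed_walk_rotate(2)[OF w i])
  next
    case (check i j)
    let ?V = "\<lambda>t. V ((t + i) mod k)" and ?C = "\<lambda>t. C ((t + i) mod k)"
    have i: "i < k" and ji: "0 < j - i" "j - i < k" using check by auto
    have "?C (j - i) = ?C 0" using check by simp
    note split = closed_walk_split_at_check[OF closed_walk_rotate(1)[OF w i] ji this]
    have "walk_product h k ?V ?C = 1"
      unfolding split(3) less.IH[OF ji(2) split(1)] less.IH[OF diff_less[OF ji(1) k] split(2)] by simp
    then show ?thesis by (simp add: closed_walk_rotate(2)[OF w i])
  next
    case simple
    then show ?thesis using cycles w by blast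
  qed
qed

lemma prod_lessThan_double: "(\<Prod>s<2 * k. f s) = (\<Prod>t<k. f (2 * t) * f (Suc (2 * t)))"
  for f :: "nat \<Rightarrow> 'a::comm_monoid_mult"
  by (induction k) (auto simp: mult.assoc)

lemma closed_walk_interleave:
  assumes k: "0 < k" and Vk: "V k = V 0"
    and steps: "\<forall>t<k. V t \<in> Vs \<and> U t \<in> Vs \<and> C\<^sub>1 t \<in> Cs \<and> C\<^sub>2 t \<in> Cs \<and>
      E (C\<^sub>1 t) (V t) \<and> E (C\<^sub>1 t) (U t) \<and> E (C\<^sub>2 t) (U t) \<and> E (C\<^sub>2 t) (V (Suc t))"
  defines "V' \<equiv> \<lambda>s. if even s then V (s div 2) else U (s div 2)"
    and "C' \<equiv> \<lambda>s. if even s then C\<^sub>1 (s div 2) else C\<^sub>2 (s div 2)"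
  shows "closed_walk E Vs Cs (2 * k) V' C'"
    and "walk_product h (2 * k) V' C' = (\<Prod>t<k. two_step_product h (C\<^sub>1 t) (C\<^sub>2 t) (V t) (U t) (V (Suc t)))"
proof -
  have odd_Suc: "odd s \<Longrightarrow> Suc s div 2 = Suc (s div 2)"
    and even_Suc: "even s \<Longrightarrow> Suc s div 2 = s div 2" for s :: nat
    by presburger+
  show "closed_walk E Vs Cs (2 * k) V' C'"
    unfolding closed_walk_def
  proof (intro conjI allI impI)
    fix s assume "s < 2 * k"
    then have "s div 2 < k" by simp
    note step = steps[rule_format, OF this]
    show "C' s \<in> Cs" "V' s \<in> Vs" "E (C' s) (V' s)"
      using step by (simp_all add: V'_def C'_def)
    show "E (C' s) (V' (Suc s))"
      using step odd_Suc[of s] even_Suc[of s] by (simp add: V'_def C'_def)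
  qed (use k Vk in \<open>auto simp: V'_def\<close>)
  have interleaved: "V' (2 * t) = V t" "V' (Suc (2 * t)) = U t" "V' (Suc (Suc (2 * t))) = V (Suc t)"
    "C' (2 * t) = C\<^sub>1 t" "C' (Suc (2 * t)) = C\<^sub>2 t" for t
    unfolding V'_def C'_def by (simp_all add: odd_Suc)
  show "walk_product h (2 * k) V' C' = (\<Prod>t<k. two_step_product h (C\<^sub>1 t) (C\<^sub>2 t) (V t) (U t) (V (Suc t)))"
    unfolding walk_product_def two_step_product_def prod_lessThan_double by (simp only: interleaved)
qed

subsection \<open>The toric Tanner graphs\<close>

definition torus_nbr :: "nat \<Rightarrow> nat \<Rightarrow> nat \<Rightarrow> bool" where
  "torus_nbr n x y \<longleftrightarrow> y = (x + 1) mod (2 * n) \<or> y = (x + 2 * n - 1) mod (2 * n)"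

lemma adj_iff_torus_nbr:
  "adj n (i, j) v \<longleftrightarrow> (torus_nbr n i (fst v) \<and> snd v = j) \<or> (fst v = i \<and> torus_nbr n j (snd v))"
  by (cases v) (auto simp: adj_def torus_nbr_def)

lemma torus_nbr_sym:
  assumes x: "x < 2 * n" and y: "torus_nbr n x y"
  shows "torus_nbr n y x"
proof -
  consider "y = (x + 1) mod (2 * n)" | "y = (x + 2 * n - 1) mod (2 * n)"
    using y by (auto simp: torus_nbr_def)
  then show ?thesis
  proof cases
    case 1
    show ?thesis
    proof (cases "x + 1 < 2 * n")
      case True
      then show ?thesis using 1 unfolding torus_nbr_def by auto
    next
      case False
      then have "x + 1 = 2 * n" using x by auto
      then show ?thesis using 1 unfolding torus_nbr_def by auto
    qed
  next
    case 2
    then show ?thesis using x unfolding torus_nbr_def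
      by (cases "x = 0") (auto simp: mod_if)
  qed
qed

lemma torus_nbr_less: "x < 2 * n \<Longrightarrow> torus_nbr n x y \<Longrightarrow> y < 2 * n"
  by (auto simp: torus_nbr_def)

lemma torus_nbr_parity:
  assumes x: "x < 2 * n" and y: "torus_nbr n x y"
  shows "even y \<longleftrightarrow> odd x"
proof -
  consider "y = (x + 1) mod (2 * n)" | "y = (x + 2 * n - 1) mod (2 * n)"
    using y by (auto simp: torus_nbr_def)
  then show ?thesis
  proof cases
    case 1
    show ?thesis
    proof (cases "x + 1 < 2 * n")
      case True
      then show ?thesis using 1 by auto
    next
      case False
      then have "x + 1 = 2 * n" using x by auto
      then show ?thesis using 1 by (auto; presburger)
    qed
  next
    case 2
    then show ?thesis using x by (cases "x = 0") (auto simp: mod_if)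
  qed
qed

lemma adj_in_varN: "c \<in> chkX n \<union> chkZ n \<Longrightarrow> adj n c v \<Longrightarrow> v \<in> varN n"
  using torus_nbr_less[of "fst c" n "fst v"] torus_nbr_less[of "snd c" n "snd v"]
    torus_nbr_parity[of "fst c" n "fst v"] torus_nbr_parity[of "snd c" n "snd v"]
  by (cases c; cases v) (auto simp: adj_iff_torus_nbr varN_def chkX_def chkZ_def)

lemma common_nbrs_chkX_chkZ:
  "c \<in> chkX n \<Longrightarrow> d \<in> chkZ n \<Longrightarrow> adj n c v \<Longrightarrow> adj n d v \<Longrightarrow>
    v = (fst d, snd c) \<or> v = (fst c, snd d)"
  by (cases c; cases d; cases v) (auto simp: adj_iff_torus_nbr chkX_def chkZ_def)

lemma chkX_diagonal_to_chkZ: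
  assumes "torus_nbr n i x" "torus_nbr n j y" "(i, j) \<in> chkZ n"
  shows "(x, y) \<in> chkX n" "adj n (x, y) (x, j)" "adj n (x, y) (i, y)"
  using assms torus_nbr_sym[of j n y] torus_nbr_sym[of i n x] torus_nbr_less[of i n x]
    torus_nbr_less[of j n y] torus_nbr_parity[of i n x] torus_nbr_parity[of j n y]
  by (auto simp: adj_iff_torus_nbr chkX_def chkZ_def)

lemma chkZ_step_X_detour:
  assumes d: "d \<in> chkZ n" and a: "adj n d a" and b: "adj n d b"
  obtains u c\<^sub>1 c\<^sub>2 where "adj n d u" "c\<^sub>1 \<in> chkX n" "c\<^sub>2 \<in> chkX n"
    "adj n c\<^sub>1 a" "adj n c\<^sub>1 u" "adj n c\<^sub>2 u" "adj n c\<^sub>2 b"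
proof -
  obtain i j where ij: "d = (i, j)" by force
  have dZ: "(i, j) \<in> chkZ n" using d ij by simp
  define x\<^sub>0 y\<^sub>0 where "x\<^sub>0 = (i + 1) mod (2 * n)" and "y\<^sub>0 = (j + 1) mod (2 * n)"
  have x\<^sub>0: "torus_nbr n i x\<^sub>0" and y\<^sub>0: "torus_nbr n j y\<^sub>0"
    by (simp_all add: torus_nbr_def x\<^sub>0_def y\<^sub>0_def)
  have nbrs: "\<And>v. adj n d v \<Longrightarrow>
      (\<exists>x. v = (x, j) \<and> torus_nbr n i x) \<or> (\<exists>y. v = (i, y) \<and> torus_nbr n j y)"
    unfolding ij adj_iff_torus_nbr by auto
  note diag = chkX_diagonal_to_chkZ[OF _ _ dZ]
  \<comment> \<open>If a and b lie on the same axis through d, u is a neighbour of d on the other axis;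
    otherwise u = b and the X-check diagonal to d between a and b serves twice.\<close>
  consider x\<^sub>1 x\<^sub>2 where "a = (x\<^sub>1, j)" "torus_nbr n i x\<^sub>1" "b = (x\<^sub>2, j)" "torus_nbr n i x\<^sub>2"
    | x\<^sub>1 y\<^sub>2 where "a = (x\<^sub>1, j)" "torus_nbr n i x\<^sub>1" "b = (i, y\<^sub>2)" "torus_nbr n j y\<^sub>2"
    | y\<^sub>1 x\<^sub>2 where "a = (i, y\<^sub>1)" "torus_nbr n j y\<^sub>1" "b = (x\<^sub>2, j)" "torus_nbr n i x\<^sub>2"
    | y\<^sub>1 y\<^sub>2 where "a = (i, y\<^sub>1)" "torus_nbr n j y\<^sub>1" "b = (i, y\<^sub>2)" "torus_nbr n j y\<^sub>2"
    using nbrs[OF a] nbrs[OF b] by blast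
  then show ?thesis
  proof cases
    case (1 x\<^sub>1 x\<^sub>2)
    have "adj n d (i, y\<^sub>0)" using y\<^sub>0 by (simp add: ij adj_iff_torus_nbr)
    then show ?thesis using that diag[OF 1(2) y\<^sub>0] diag[OF 1(4) y\<^sub>0] 1 by blast
  next
    case (2 x\<^sub>1 y\<^sub>2)
    then show ?thesis using that diag[OF 2(2) 2(4)] b by blast
  next
    case (3 y\<^sub>1 x\<^sub>2)
    then show ?thesis using that diag[OF 3(4) 3(2)] b by blast
  next
    case (4 y\<^sub>1 y\<^sub>2)
    have "adj n d (x\<^sub>0, j)" using x\<^sub>0 by (simp add: ij adj_iff_torus_nbr)
    then show ?thesis using that diag[OF x\<^sub>0 4(2)] diag[OF x\<^sub>0 4(4)] 4 by blast
  qed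
qed

lemma closed_walk_of_cycle:
  assumes cycle: "is_cycle n Cs vs cs"
  defines "V \<equiv> \<lambda>t. vs ! (t mod length vs)"
  shows "closed_walk (adj n) (varN n) Cs (length vs) V ((!) cs)"
    and "cycle_product h vs cs = walk_product h (length vs) V ((!) cs)"
proof -
  have V_Suc: "V (Suc t) = vs ! ((t + 1) mod length vs)" for t by (simp add: V_def)
  have "cs ! t \<in> Cs \<and> vs ! t \<in> varN n" if "t < length vs" for t
    using cycle that nth_mem[of t cs] nth_mem[of t vs] unfolding is_cycle_def by auto
  then show "closed_walk (adj n) (varN n) Cs (length vs) V ((!) cs)"
    using cycle unfolding closed_walk_def is_cycle_def V_Suc by (auto simp: V_def)
  show "cycle_product h vs cs = walk_product h (length vs) V ((!) cs)"
    unfolding cycle_product_def walk_product_def V_Suc by (rule prod.cong) (simp_all add: V_def)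
qed

lemma cycle_of_closed_walk:
  assumes w: "closed_walk (adj n) (varN n) Cs k V C"
    and k: "2 \<le> k" and inj: "inj_on V {..<k}" "inj_on C {..<k}"
  shows "is_cycle n Cs (map V [0..<k]) (map C [0..<k])"
    and "cycle_product h (map V [0..<k]) (map C [0..<k]) = walk_product h k V C"
proof -
  have V_Suc: "V (Suc t mod k) = V (Suc t)" if "t < k" for t
    using w that by (cases "Suc t = k") (auto simp: closed_walk_def)
  show "is_cycle n Cs (map V [0..<k]) (map C [0..<k])"
    unfolding is_cycle_def using k inj closed_walkD[OF w] V_Suc
    by (auto simp: distinct_map atLeast0LessThan)
  show "cycle_product h (map V [0..<k]) (map C [0..<k]) = walk_product h k V C"
    unfolding cycle_product_def walk_product_def using V_Suc by (auto intro!: prod.cong)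
qed

subsection \<open>Orthogonality of the labelled check rows\<close>

lemma two_eq_zero_if_card_eq_power_two:
  assumes "card (UNIV :: 'a::{finite,field} set) = 2 ^ m"
  shows "(2::'a) = 0"
proof -
  have "(2::'a) ^ m = of_nat (card (UNIV :: 'a set))" using assms by simp
  also have "\<dots> = 0" using CHAR_dvd_CARD of_nat_eq_0_iff_char_dvd by blast
  finally show ?thesis by simp
qed

lemma finite_varN: "finite (varN n)"
  by (rule finite_subset[of _ "{..<2 * n} \<times> {..<2 * n}"]) (auto simp: varN_def)

lemma chkX_row_orthogonal_chkZ_row:
  assumes P: "perp n (code n (chkZ n) hZ) \<subseteq> code n (chkX n) hX"
    and c: "c \<in> chkX n" and d: "d \<in> chkZ n"
  shows "(\<Sum>v\<in>varN n. hX c v * hZ d v) = 0"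
proof -
  define u where "u v = (if v \<in> varN n then hZ d v else 0)" for v
  have "u \<in> perp n (code n (chkZ n) hZ)"
    unfolding perp_def
  proof (intro CollectI conjI ballI)
    show "u \<in> vecs n" by (simp add: u_def vecs_def)
    fix w assume "w \<in> code n (chkZ n) hZ"
    then have "(\<Sum>v\<in>varN n. hZ d v * w v) = 0" using d by (auto simp: code_def)
    then show "(\<Sum>v\<in>varN n. u v * w v) = 0" by (simp add: u_def)
  qed
  with P have "u \<in> code n (chkX n) hX" by blast
  then have "(\<Sum>v\<in>varN n. hX c v * u v) = 0" using c by (auto simp: code_def)
  then show ?thesis by (simp add: u_def)
qed

text \<open>In characteristic 2 the two terms of the vanishing inner product are equal.\<close>

lemma label_products_agree:
  assumes labX: "is_labeling n (chkX n) hX" and labZ: "is_labeling n (chkZ n) hZ"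
    and P: "perp n (code n (chkZ n) hZ) \<subseteq> code n (chkX n) hX"
    and two: "(2::'a::field) = 0"
    and c: "c \<in> chkX n" and d: "d \<in> chkZ n"
    and a: "adj n c a" "adj n d a" and b: "adj n c b" "adj n d b"
  shows "hX c a * hZ d a = hX c b * (hZ d b :: 'a)"
proof (cases "a = b")
  case False
  have av: "a \<in> varN n" and bv: "b \<in> varN n"
    using c a(1) b(1) adj_in_varN[of c n a] adj_in_varN[of c n b] by simp_all
  have others: "hX c v * hZ d v = 0" if "v \<in> varN n - {a, b}" for v
  proof (cases "adj n c v \<and> adj n d v")
    case True
    then have "v = (fst d, snd c) \<or> v = (fst c, snd d)"
      using common_nbrs_chkX_chkZ[OF c d] by blast
    moreover have "a = (fst d, snd c) \<or> a = (fst c, snd d)"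
      and "b = (fst d, snd c) \<or> b = (fst c, snd d)"
      using common_nbrs_chkX_chkZ[OF c d] a b by blast+
    ultimately have "v \<in> {a, b}" using False by auto
    then show ?thesis using that by simp
  next
    case False
    then show ?thesis using labX labZ c d that by (auto simp: is_labeling_def)
  qed
  have "(\<Sum>v\<in>varN n. hX c v * hZ d v) = (\<Sum>v\<in>{a, b}. hX c v * hZ d v)"
    by (rule sum.mono_neutral_right[OF finite_varN]) (use av bv others in auto)
  then have "hX c a * hZ d a + hX c b * hZ d b = 0"
    using chkX_row_orthogonal_chkZ_row[OF P c d] False by simp
  then show ?thesis using two by (metis add_right_cancel mult_2 mult_zero_left)
qed simp

lemma step_ratio_eq_inverse_detour_ratio:
  fixes x\<^sub>1a x\<^sub>1u x\<^sub>2u x\<^sub>2b z\<^sub>a z\<^sub>u z\<^sub>b :: "'a::field"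
  assumes "x\<^sub>1a \<noteq> 0" "x\<^sub>1u \<noteq> 0" "x\<^sub>2u \<noteq> 0" "x\<^sub>2b \<noteq> 0" "z\<^sub>a \<noteq> 0" "z\<^sub>u \<noteq> 0" "z\<^sub>b \<noteq> 0"
    and "x\<^sub>1a * z\<^sub>a = x\<^sub>1u * z\<^sub>u" "x\<^sub>2u * z\<^sub>u = x\<^sub>2b * z\<^sub>b"
  shows "z\<^sub>b * inverse z\<^sub>a = inverse (x\<^sub>1u * inverse x\<^sub>1a * (x\<^sub>2b * inverse x\<^sub>2u))"
proof -
  have "z\<^sub>b = x\<^sub>2u * z\<^sub>u / x\<^sub>2b" and "z\<^sub>u = x\<^sub>1a * z\<^sub>a / x\<^sub>1u"
    using assms by (simp_all add: field_simps)
  then have "z\<^sub>b = x\<^sub>2u * x\<^sub>1a * z\<^sub>a / (x\<^sub>2b * x\<^sub>1u)" by (simp add: ac_simps)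
  then show ?thesis using assms by (simp add: field_simps)
qed

lemma chkZ_step_ratio:
  fixes hX hZ :: "nat \<times> nat \<Rightarrow> nat \<times> nat \<Rightarrow> 'a::field"
  assumes labX: "is_labeling n (chkX n) hX" and labZ: "is_labeling n (chkZ n) hZ"
    and P: "perp n (code n (chkZ n) hZ) \<subseteq> code n (chkX n) hX"
    and two: "(2::'a) = 0"
    and d: "d \<in> chkZ n" and a: "adj n d a" and b: "adj n d b"
  obtains u c\<^sub>1 c\<^sub>2 where "adj n d u" "c\<^sub>1 \<in> chkX n" "c\<^sub>2 \<in> chkX n"
    "adj n c\<^sub>1 a" "adj n c\<^sub>1 u" "adj n c\<^sub>2 u" "adj n c\<^sub>2 b"
    "hZ d b * inverse (hZ d a) = inverse (two_step_product hX c\<^sub>1 c\<^sub>2 a u b)"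
proof -
  obtain u c\<^sub>1 c\<^sub>2 where detour: "adj n d u" "c\<^sub>1 \<in> chkX n" "c\<^sub>2 \<in> chkX n"
    "adj n c\<^sub>1 a" "adj n c\<^sub>1 u" "adj n c\<^sub>2 u" "adj n c\<^sub>2 b"
    using chkZ_step_X_detour[OF d a b] .
  have "a \<in> varN n" "u \<in> varN n" "b \<in> varN n"
    using d a b detour(1) adj_in_varN[of d n a] adj_in_varN[of d n u] adj_in_varN[of d n b]
    by simp_all
  then have nonzero: "hX c\<^sub>1 a \<noteq> 0" "hX c\<^sub>1 u \<noteq> 0" "hX c\<^sub>2 u \<noteq> 0" "hX c\<^sub>2 b \<noteq> 0"
      "hZ d a \<noteq> 0" "hZ d u \<noteq> 0" "hZ d b \<noteq> 0"
    using labX labZ detour d a b by (auto simp: is_labeling_def)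
  have "hZ d b * inverse (hZ d a) = inverse (two_step_product hX c\<^sub>1 c\<^sub>2 a u b)"
    unfolding two_step_product_def
    by (rule step_ratio_eq_inverse_detour_ratio[OF nonzero
        label_products_agree[OF labX labZ P two detour(2) d detour(4) a detour(5,1)]
        label_products_agree[OF labX labZ P two detour(3) d detour(6,1,7) b]])
  then show ?thesis by (rule that[OF detour])
qed

lemma chkZ_walk_product_eq_inverse_chkX_walk_product:
  fixes hX hZ :: "nat \<times> nat \<Rightarrow> nat \<times> nat \<Rightarrow> 'a::field"
  assumes labX: "is_labeling n (chkX n) hX" and labZ: "is_labeling n (chkZ n) hZ"
    and P: "perp n (code n (chkZ n) hZ) \<subseteq> code n (chkX n) hX"
    and two: "(2::'a) = 0"
    and w: "closed_walk (adj n) (varN n) (chkZ n) k V D"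
  obtains V' C' where "closed_walk (adj n) (varN n) (chkX n) (2 * k) V' C'"
    "walk_product hZ k V D = inverse (walk_product hX (2 * k) V' C')"
proof -
  have "\<exists>u c\<^sub>1 c\<^sub>2. adj n (D t) u \<and> c\<^sub>1 \<in> chkX n \<and> c\<^sub>2 \<in> chkX n \<and>
      adj n c\<^sub>1 (V t) \<and> adj n c\<^sub>1 u \<and> adj n c\<^sub>2 u \<and> adj n c\<^sub>2 (V (Suc t)) \<and>
      hZ (D t) (V (Suc t)) * inverse (hZ (D t) (V t)) = inverse (two_step_product hX c\<^sub>1 c\<^sub>2 (V t) u (V (Suc t)))"
    if "t < k" for t
    by (rule chkZ_step_ratio[OF labX labZ P two closed_walkD(1,3,4)[OF w that]]) blast
  then obtain U C\<^sub>1 C\<^sub>2 where step: "\<And>t. t < k \<Longrightarrow>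
      adj n (D t) (U t) \<and> C\<^sub>1 t \<in> chkX n \<and> C\<^sub>2 t \<in> chkX n \<and>
      adj n (C\<^sub>1 t) (V t) \<and> adj n (C\<^sub>1 t) (U t) \<and> adj n (C\<^sub>2 t) (U t) \<and> adj n (C\<^sub>2 t) (V (Suc t)) \<and>
      hZ (D t) (V (Suc t)) * inverse (hZ (D t) (V t)) =
        inverse (two_step_product hX (C\<^sub>1 t) (C\<^sub>2 t) (V t) (U t) (V (Suc t)))"
    by metis
  have k: "0 < k" and Vk: "V k = V 0" using w by (auto simp: closed_walk_def)
  have X_steps: "\<forall>t<k.
      V t \<in> varN n \<and> U t \<in> varN n \<and> C\<^sub>1 t \<in> chkX n \<and> C\<^sub>2 t \<in> chkX n \<and>
      adj n (C\<^sub>1 t) (V t) \<and> adj n (C\<^sub>1 t) (U t) \<and> adj n (C\<^sub>2 t) (U t) \<and> adj n (C\<^sub>2 t) (V (Suc t))"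
    (is "\<forall>t<k. ?X_step t")
  proof (intro allI impI)
    fix t assume t: "t < k"
    show "?X_step t"
      using step[OF t] closed_walkD(1,2)[OF w t] adj_in_varN[of "D t" n "U t"] by simp
  qed
  note X_walk = closed_walk_interleave[where E = "adj n" and V = V and U = U
      and C\<^sub>1 = C\<^sub>1 and C\<^sub>2 = C\<^sub>2, OF k Vk X_steps]
  have Z_product:
    "walk_product hZ k V D = inverse (\<Prod>t<k. two_step_product hX (C\<^sub>1 t) (C\<^sub>2 t) (V t) (U t) (V (Suc t)))"
    unfolding walk_product_def prod_inversef[symmetric] by (rule prod.cong) (use step in auto)
  show ?thesis
    by (rule that[OF X_walk(1)]) (simp only: Z_product X_walk(2))
qed

theorem lemma3:
  fixes n m :: nat
    and hX hZ :: "nat \<times> nat \<Rightarrow> nat \<times> nat \<Rightarrow> 'a::{finite,field}"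
  assumes "n \<ge> 2"
    and "card (UNIV :: 'a set) = 2 ^ m"
    and "is_labeling n (chkX n) hX"
    and "is_labeling n (chkZ n) hZ"
    and "\<forall>vs cs. is_cycle n (chkX n) vs cs \<longrightarrow> cycle_product hX vs cs = 1"
    and "perp n (code n (chkZ n) hZ) \<subseteq> code n (chkX n) hX"
  shows "\<forall>vs cs. is_cycle n (chkZ n) vs cs \<longrightarrow> cycle_product hZ vs cs = 1"
proof (intro allI impI)
  fix vs cs assume cycle: "is_cycle n (chkZ n) vs cs"
  have two: "(2::'a) = 0" using assms(2) by (rule two_eq_zero_if_card_eq_power_two)
  obtain V' C' where X_walk: "closed_walk (adj n) (varN n) (chkX n) (2 * length vs) V' C'"
    and Z_product: "cycle_product hZ vs cs = inverse (walk_product hX (2 * length vs) V' C')"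
    using chkZ_walk_product_eq_inverse_chkX_walk_product[OF assms(3,4,6) two
        closed_walk_of_cycle(1)[OF cycle]]
    unfolding closed_walk_of_cycle(2)[OF cycle, symmetric] .
  have "walk_product hX (2 * length vs) V' C' = 1"
  proof (rule walk_product_eq_one_if_cycles[OF _ _ X_walk])
    show "hX c v \<noteq> 0" if "c \<in> chkX n" "v \<in> varN n" "adj n c v" for c v
      using assms(3) that by (simp add: is_labeling_def)
    show "walk_product hX k V C = 1"
      if "closed_walk (adj n) (varN n) (chkX n) k V C" "2 \<le> k" "inj_on V {..<k}" "inj_on C {..<k}"
      for k V C
      using cycle_of_closed_walk(1)[OF that] cycle_of_closed_walk(2)[OF that, of hX] assms(5)
      by simp
  qed
  then show "cycle_product hZ vs cs = 1" using Z_product by simp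
qed

end
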